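(* Let $R\subseteq\mathbb{N}$ be a random set obtained by including each $n\in\mathbb{N}$ in $R$ independently with probability $1/2$. Then $R$ is rich with probability $1$.
   Context: A set $R\subseteq\mathbb{N}$ is rich if for all $s,u,v\in\mathbb{N}$, all $\bar a_0\in\{0,1\}^s\setminus\{\bar0\}$, $\bar a_1,\dots,\bar a_u\in\mathbb{N}^s$ and all $c_1,\dots,c_u\in\mathbb{N}$ with $(\bar a_0,0)\ne(\bar a_i,c_i)$ for all $i\in\{1,\dots,u\}$, there exist $\bar x,\bar y\in(v+\mathbb{N})^s$ (vectors with all entries $\ge v$) such that $\bar a_0^\top\bar x\in R\iff\bar a_0^\top\bar y\notin R$, and $\bar a_i^\top\bar x-c_i\in R\iff\bar a_i^\top\bar y-c_i\in R$ for all $i\in\{1,\dots,u\}$. *)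

theory Defs
  imports "HOL-Probability.Probability"
begin

text \<open>Vectors in N^s are represented as functions nat => nat, only indices j < s matter.
  The dot product of a and x over the first s coordinates.\<close>
definition dotp :: "nat \<Rightarrow> (nat \<Rightarrow> nat) \<Rightarrow> (nat \<Rightarrow> nat) \<Rightarrow> nat" where
  "dotp s a x = (\<Sum>j<s. a j * x j)"

text \<open>Richness. The vectors a_1..a_u are a i for i in {1..u}; the constants are c i.
  The expression a_i^T x - c_i is an integer; it lies in R only if it is a natural number in R.\<close>
definition rich :: "nat set \<Rightarrow> bool" where
  "rich R \<longleftrightarrow>
    (\<forall>s u v :: nat. \<forall>a0 :: nat \<Rightarrow> nat. \<forall>a :: nat \<Rightarrow> nat \<Rightarrow> nat. \<forall>c :: nat \<Rightarrow> nat.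
      (\<forall>j<s. a0 j \<in> {0, 1}) \<longrightarrow> (\<exists>j<s. a0 j \<noteq> 0) \<longrightarrow>
      (\<forall>i\<in>{1..u}. \<not> ((\<forall>j<s. a i j = a0 j) \<and> c i = 0)) \<longrightarrow>
      (\<exists>x y :: nat \<Rightarrow> nat. (\<forall>j<s. v \<le> x j \<and> v \<le> y j) \<and>
         (dotp s a0 x \<in> R \<longleftrightarrow> dotp s a0 y \<notin> R) \<and>
         (\<forall>i\<in>{1..u}. (int (dotp s (a i) x) - int (c i) \<in> int ` R
                        \<longleftrightarrow> int (dotp s (a i) y) - int (c i) \<in> int ` R))))"

text \<open>The random set: R = {n. w n} where w is drawn from the product of independent fair coins.\<close>
definition coin_space :: "(nat \<Rightarrow> bool) measure" where
  "coin_space = PiM UNIV (\<lambda>_::nat. measure_pmf (bernoulli_pmf (1/2)))"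

end

theory Submission
  imports Defs
begin

(*
  For fixed data the candidate pairs come in scales k: x has entries X_k A^j, a base-A
  expansion with A larger than every coefficient sum, so that a_0 x differs from every
  a_i x - c_i; y is the constant Y_k, so that every value at y lies below X_k <= a_0 x.
  All numbers inspected at scale k lie in the window [Y_k - C, X_k A^s] (C the sum of the
  c_i), and for geometrically growing scales these windows are disjoint. The coins on disjoint windows
  of bounded size are independent, so almost surely some window meets R exactly in a_0 x,
  and the pair of that scale witnesses richness. Only finitely many values of the data
  matter, so richness is a countable conjunction of almost sure events.
*)

section \<open>Independent fair coins\<close>

lemma (in prob_space) AE_ex_notin_indep_events:
  fixes F :: "nat \<Rightarrow> 'a set"
  assumes indep: "indep_events F UNIV" and bound: "\<And>k. prob (F k) \<le> r" and "r < 1"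
  shows "AE x in M. \<exists>k. x \<notin> F k"
proof -
  have r: "0 \<le> r" using bound[of 0] measure_nonneg[of M "F 0"] by linarith
  have events: "F k \<in> events" for k
    using indep by (auto simp: indep_events_def)
  have "prob (\<Inter>k. F k) \<le> r ^ K" for K
  proof (cases "K = 0")
    case False
    have "prob (\<Inter>k. F k) \<le> prob (\<Inter>k\<in>{..<K}. F k)"
      using events False by (intro finite_measure_mono) auto
    also have "\<dots> = (\<Prod>k<K. prob (F k))"
      using indep False unfolding indep_events_def by (simp add: lessThan_empty_iff)
    also have "\<dots> \<le> (\<Prod>k<K. r)"
      by (intro prod_mono) (auto simp: bound)
    finally show ?thesis by simp
  qed simp
  moreover have "(\<lambda>K. r ^ K) \<longlonglongrightarrow> 0"
    using r \<open>r < 1\<close> by (intro LIMSEQ_power_zero) auto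
  ultimately have "prob (\<Inter>k. F k) \<le> 0"
    by (intro LIMSEQ_le_const) auto
  then have "prob (\<Inter>k. F k) = 0"
    using measure_nonneg[of M] by (simp add: order_antisym)
  then have "AE x in M. x \<notin> (\<Inter>k. F k)"
    using events by (subst prob_eq_0[symmetric]) auto
  then show ?thesis by simp
qed

abbreviation coin :: "bool measure" where
  "coin \<equiv> measure_pmf (bernoulli_pmf (1/2))"

interpretation coins: product_prob_space "\<lambda>_::nat. coin" UNIV
  by (intro product_prob_spaceI measure_pmf.prob_space_axioms)

lemma coins_indep_vars: "coins.indep_vars (\<lambda>_. coin) (\<lambda>n w. w n) UNIV"
  by (subst coins.indep_vars_iff_distr_eq_PiM)
     (auto simp: coins.PiM_component restrict_def cong: PiM_cong)

lemma coins_pattern_event: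
  assumes "finite S"
  shows "{w \<in> space (PiM UNIV (\<lambda>_. coin)). \<forall>n\<in>S. w n = b n} \<in> coins.events"
    and "coins.prob {w \<in> space (PiM UNIV (\<lambda>_. coin)). \<forall>n\<in>S. w n = b n} = (1/2) ^ card S"
proof -
  have eq: "{w \<in> space (PiM UNIV (\<lambda>_. coin)). \<forall>n\<in>S. w n = b n}
      = prod_emb UNIV (\<lambda>_. coin) S (PiE S (\<lambda>n. {b n}))"
    by (simp add: space_PiM prod_emb_def restrict_PiE_iff set_eq_iff Pi_iff)
  show "{w \<in> space (PiM UNIV (\<lambda>_. coin)). \<forall>n\<in>S. w n = b n} \<in> coins.events"
    unfolding eq using assms by (intro measurable_prod_emb sets_PiM_I_finite) auto
  show "coins.prob {w \<in> space (PiM UNIV (\<lambda>_. coin)). \<forall>n\<in>S. w n = b n} = (1/2) ^ card S"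
    unfolding eq using assms by (subst coins.measure_PiM_emb) (auto simp: measure_pmf_single)
qed

lemma AE_coin_space_pattern_in_some_window:
  fixes S :: "nat \<Rightarrow> nat set" and b :: "nat \<Rightarrow> nat \<Rightarrow> bool"
  assumes fin: "\<And>k. finite (S k)" and card: "\<And>k. card (S k) \<le> m" and disj: "disjoint_family S"
  shows "AE w in coin_space. \<exists>k. \<forall>n\<in>S k. w n = b k n"
proof -
  let ?M = "PiM UNIV (\<lambda>_::nat. coin)"
  define F where "F k = {w \<in> space ?M. \<not> (\<forall>n\<in>S k. w n = b k n)}" for k
  have window_events: "{f \<in> space (PiM (S k) (\<lambda>_. coin)). \<not> (\<forall>n\<in>S k. f n = b k n)}
      \<in> sets (PiM (S k) (\<lambda>_. coin))" for k
  proof -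
    have "{f \<in> space (PiM (S k) (\<lambda>_. coin)). \<not> (\<forall>n\<in>S k. f n = b k n)}
        = space (PiM (S k) (\<lambda>_. coin)) - PiE (S k) (\<lambda>n. {b k n})"
      by (auto simp: space_PiM PiE_def Pi_iff)
    then show ?thesis
      using fin by (auto intro!: sets.Diff sets_PiM_I_finite)
  qed
  have "coins.indep_events
      (\<lambda>k. {w \<in> space ?M. \<not> (\<forall>n\<in>S k. restrict (\<lambda>n. w n) (S k) n = b k n)}) UNIV"
    by (rule coins.indep_eventsI_indep_vars[OF coins.indep_vars_restrict[OF coins_indep_vars]])
       (use disj window_events in auto)
  then have indep: "coins.indep_events F UNIV"
    unfolding F_def by simp
  have "coins.prob (F k) \<le> 1 - (1/2) ^ m" for k
  proof -
    have "F k = space ?M - {w \<in> space ?M. \<forall>n\<in>S k. w n = b k n}"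
      unfolding F_def by auto
    moreover have "(1/2::real) ^ m \<le> (1/2) ^ card (S k)"
      using card by (intro power_decreasing) auto
    ultimately show ?thesis
      using coins_pattern_event[OF fin] by (simp add: coins.prob_compl)
  qed
  then have "AE w in ?M. \<exists>k. w \<notin> F k"
    by (rule coins.AE_ex_notin_indep_events[OF indep]) simp
  then show ?thesis
    unfolding coin_space_def F_def by (rule eventually_mono) (auto simp: space_PiM)
qed

section \<open>Dot products with base-A expansions\<close>

lemma dotp_const: "dotp s b (\<lambda>_. Y) = Y * (\<Sum>j<s. b j)"
  unfolding dotp_def by (simp add: sum_distrib_left mult.commute)

lemma dotp_scaled_powers: "dotp s b (\<lambda>j. X * A ^ j) = X * (\<Sum>j<s. b j * A ^ j)"
  unfolding dotp_def by (simp add: sum_distrib_left ac_simps)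

lemma dotp_cong: "(\<And>j. j < s \<Longrightarrow> b j = b' j) \<Longrightarrow> dotp s b x = dotp s b' x"
  unfolding dotp_def by (intro sum.cong) auto

lemma sum_pos_if_nonzero:
  fixes b :: "nat \<Rightarrow> nat"
  assumes "j < s" "b j \<noteq> 0"
  shows "1 \<le> (\<Sum>j<s. b j)"
proof -
  have "b j \<le> (\<Sum>j<s. b j)"
    using assms(1) by (intro member_le_sum) auto
  then show ?thesis using assms(2) by linarith
qed

lemma digits_less_power:
  fixes d :: "nat \<Rightarrow> nat"
  assumes "\<And>j. j < s \<Longrightarrow> d j < B"
  shows "(\<Sum>j<s. d j * B ^ j) < B ^ s"
  using assms
proof (induction s)
  case (Suc s)
  have "(\<Sum>j<Suc s. d j * B ^ j) < B ^ s + d s * B ^ s"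
    using Suc by simp
  also have "\<dots> \<le> B * B ^ s"
    using Suc.prems[of s] mult_right_mono[of "d s + 1" B "B ^ s"] by simp
  finally show ?case by simp
qed simp

lemma digits_inj:
  fixes d e :: "nat \<Rightarrow> nat"
  assumes "\<And>j. j < s \<Longrightarrow> d j < B" "\<And>j. j < s \<Longrightarrow> e j < B"
    and "(\<Sum>j<s. d j * B ^ j) = (\<Sum>j<s. e j * B ^ j)"
  shows "j < s \<Longrightarrow> d j = e j"
  using assms
proof (induction s arbitrary: d e j)
  case (Suc s)
  have split: "(\<Sum>j<Suc s. f j * B ^ j) = f 0 + B * (\<Sum>j<s. f (Suc j) * B ^ j)" for f :: "nat \<Rightarrow> nat"
    by (simp only: sum.lessThan_Suc_shift power_Suc power_0) (simp add: sum_distrib_left ac_simps)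
  have eq: "d 0 + B * (\<Sum>j<s. d (Suc j) * B ^ j) = e 0 + B * (\<Sum>j<s. e (Suc j) * B ^ j)"
    using Suc.prems(4) by (simp only: split)
  have "d 0 = e 0"
    using arg_cong[OF eq, of "\<lambda>n. n mod B"] Suc.prems(2,3)[of 0] by simp
  moreover have "(\<Sum>j<s. d (Suc j) * B ^ j) = (\<Sum>j<s. e (Suc j) * B ^ j)"
    using eq \<open>d 0 = e 0\<close> Suc.prems(2)[of 0] by simp
  then have "d (Suc i) = e (Suc i)" if "i < s" for i
    using Suc.IH[of i "\<lambda>j. d (Suc j)" "\<lambda>j. e (Suc j)"] Suc.prems(2,3) that by simp
  ultimately show ?case
    using Suc.prems(1) by (cases j) auto
qed simp

lemma less_if_sum_less:
  fixes b :: "nat \<Rightarrow> nat"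
  assumes "(\<Sum>j<s. b j) < A" "j < s"
  shows "b j < A"
  using member_le_sum[of j "{..<s}" b] assms by simp

lemma dotp_const_bounds:
  fixes b :: "nat \<Rightarrow> nat"
  assumes "(\<Sum>j<s. b j) < A" "j < s" "b j \<noteq> 0" "d \<le> C" "C < Y" "A * Y \<le> X"
  shows "d \<le> dotp s b (\<lambda>_. Y)" "Y - C \<le> dotp s b (\<lambda>_. Y) - d" "dotp s b (\<lambda>_. Y) < X"
proof -
  have "Y \<le> dotp s b (\<lambda>_. Y)"
    unfolding dotp_const using sum_pos_if_nonzero[of j s b, OF assms(2,3)] by simp
  then show "d \<le> dotp s b (\<lambda>_. Y)" "Y - C \<le> dotp s b (\<lambda>_. Y) - d"
    using assms(4,5) by linarith+
  have "Y * (\<Sum>j<s. b j) < Y * A"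
    using assms(1,5) by simp
  then show "dotp s b (\<lambda>_. Y) < X"
    unfolding dotp_const using assms(6) by (metis less_le_trans mult.commute)
qed

lemma dotp_scaled_powers_bounds:
  fixes b :: "nat \<Rightarrow> nat"
  assumes "(\<Sum>j<s. b j) < A" "j < s" "b j \<noteq> 0" "d \<le> C" "C < X"
  shows "d \<le> dotp s b (\<lambda>j. X * A ^ j)" "X - C \<le> dotp s b (\<lambda>j. X * A ^ j) - d"
    "dotp s b (\<lambda>j. X * A ^ j) \<le> X * A ^ s"
proof -
  have "1 \<le> (\<Sum>j<s. b j * A ^ j)"
    using assms by (intro sum_pos_if_nonzero[of j]) auto
  then have "X \<le> dotp s b (\<lambda>j. X * A ^ j)"
    unfolding dotp_scaled_powers by simp
  then show "d \<le> dotp s b (\<lambda>j. X * A ^ j)" "X - C \<le> dotp s b (\<lambda>j. X * A ^ j) - d"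
    using assms(4,5) by linarith+
  have "(\<Sum>j<s. b j * A ^ j) < A ^ s"
    using less_if_sum_less[OF assms(1)] by (intro digits_less_power)
  then show "dotp s b (\<lambda>j. X * A ^ j) \<le> X * A ^ s"
    unfolding dotp_scaled_powers by simp
qed

lemma dotp_scaled_powers_diff_neq:
  fixes b a0 :: "nat \<Rightarrow> nat"
  assumes "(\<Sum>j<s. b j) < A" "(\<Sum>j<s. a0 j) < A" "j < s" "b j \<noteq> 0" "d < X"
    and "\<not> ((\<forall>j<s. b j = a0 j) \<and> d = 0)"
  shows "dotp s b (\<lambda>j. X * A ^ j) - d \<noteq> dotp s a0 (\<lambda>j. X * A ^ j)"
proof -
  define vb va where "vb = (\<Sum>j<s. b j * A ^ j)" and "va = (\<Sum>j<s. a0 j * A ^ j)"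
  have "1 \<le> vb"
    unfolding vb_def using assms by (intro sum_pos_if_nonzero[of j]) auto
  then have "d < X * vb"
    using assms(5) by (metis less_le_trans mult.right_neutral mult_le_mono2)
  consider "vb = va" | "vb < va" | "va + 1 \<le> vb" by linarith
  then have "X * vb - d \<noteq> X * va"
  proof cases
    case 1
    then have "\<forall>j<s. b j = a0 j"
      unfolding vb_def va_def using less_if_sum_less[OF assms(1)] less_if_sum_less[OF assms(2)]
      by (blast intro: digits_inj)
    then have "d \<noteq> 0" using assms(6) by auto
    then show ?thesis using 1 \<open>d < X * vb\<close> by simp
  next
    case 2
    then have "X * vb < X * va"
      using assms(5) by simp
    then show ?thesis by linarith
  next
    case 3
    then have "X * va + X \<le> X * vb"
      using mult_le_mono2[OF 3, of X] by (simp add: algebra_simps)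
    then show ?thesis using assms(5) by linarith
  qed
  then show ?thesis
    unfolding dotp_scaled_powers vb_def va_def .
qed

section \<open>Instances of richness\<close>

definition rich_instance ::
    "nat \<Rightarrow> nat \<Rightarrow> (nat \<Rightarrow> nat) \<Rightarrow> (nat \<Rightarrow> nat \<Rightarrow> nat) \<Rightarrow> (nat \<Rightarrow> nat) \<Rightarrow> bool"
  where "rich_instance s u a0 a c \<longleftrightarrow> (\<forall>j<s. a0 j \<in> {0, 1}) \<and> (\<exists>j<s. a0 j \<noteq> 0) \<and>
      (\<forall>i\<in>{1..u}. \<not> ((\<forall>j<s. a i j = a0 j) \<and> c i = 0))"

definition rich_witnesses :: "nat set \<Rightarrow> nat \<Rightarrow> nat \<Rightarrow> nat \<Rightarrow> (nat \<Rightarrow> nat) \<Rightarrow>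
    (nat \<Rightarrow> nat \<Rightarrow> nat) \<Rightarrow> (nat \<Rightarrow> nat) \<Rightarrow> (nat \<Rightarrow> nat) \<Rightarrow> (nat \<Rightarrow> nat) \<Rightarrow> bool"
  where "rich_witnesses R s u v a0 a c x y \<longleftrightarrow> (\<forall>j<s. v \<le> x j \<and> v \<le> y j) \<and>
      (dotp s a0 x \<in> R \<longleftrightarrow> dotp s a0 y \<notin> R) \<and>
      (\<forall>i\<in>{1..u}. int (dotp s (a i) x) - int (c i) \<in> int ` R
                   \<longleftrightarrow> int (dotp s (a i) y) - int (c i) \<in> int ` R)"

lemma rich_iff_witnesses:
  "rich R \<longleftrightarrow>
    (\<forall>s u v a0 a c. rich_instance s u a0 a c \<longrightarrow> (\<exists>x y. rich_witnesses R s u v a0 a c x y))"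
  unfolding rich_def rich_instance_def rich_witnesses_def by blast

lemma rich_instance_cong:
  assumes "\<And>j. j < s \<Longrightarrow> a0 j = a0' j" "\<And>i j. i \<in> {1..u} \<Longrightarrow> j < s \<Longrightarrow> a i j = a' i j"
    and "\<And>i. i \<in> {1..u} \<Longrightarrow> c i = c' i"
  shows "rich_instance s u a0 a c \<longleftrightarrow> rich_instance s u a0' a' c'"
  unfolding rich_instance_def using assms by auto

lemma rich_witnesses_cong:
  assumes "\<And>j. j < s \<Longrightarrow> a0 j = a0' j" "\<And>i j. i \<in> {1..u} \<Longrightarrow> j < s \<Longrightarrow> a i j = a' i j"
    and "\<And>i. i \<in> {1..u} \<Longrightarrow> c i = c' i"
  shows "rich_witnesses R s u v a0 a c x y \<longleftrightarrow> rich_witnesses R s u v a0' a' c' x y"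
proof -
  have "dotp s a0 z = dotp s a0' z" for z
    using assms(1) by (rule dotp_cong)
  moreover have "dotp s (a i) z = dotp s (a' i) z" if "i \<in> {1..u}" for i z
    using assms(2)[OF that] by (rule dotp_cong)
  ultimately show ?thesis
    unfolding rich_witnesses_def using assms(3) by (intro conj_cong ball_cong refl) auto
qed

(* Lists of the entries that matter give a countable index set for all instances. *)
lemma rich_if_list_instances:
  assumes "\<And>s u v (coeffs :: nat list) (rows :: nat list list) (constants :: nat list).
    rich_instance s u ((!) coeffs) (\<lambda>i. (!) (rows ! i)) ((!) constants) \<Longrightarrow>
    \<exists>x y. rich_witnesses R s u v ((!) coeffs) (\<lambda>i. (!) (rows ! i)) ((!) constants) x y"
  shows "rich R"
  unfolding rich_iff_witnesses
proof (intro allI impI)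
  fix s u v a0 a c
  assume "rich_instance s u a0 a c"
  let ?coeffs = "map a0 [0..<s]" and ?rows = "map (\<lambda>i. map (a i) [0..<s]) [0..<Suc u]"
    and ?constants = "map c [0..<Suc u]"
  have "rich_instance s u a0 a c \<longleftrightarrow>
      rich_instance s u ((!) ?coeffs) (\<lambda>i. (!) (?rows ! i)) ((!) ?constants)"
    by (rule rich_instance_cong) (auto simp del: upt_Suc)
  moreover have "rich_witnesses R s u v a0 a c x y \<longleftrightarrow>
      rich_witnesses R s u v ((!) ?coeffs) (\<lambda>i. (!) (?rows ! i)) ((!) ?constants) x y" for x y
    by (rule rich_witnesses_cong) (auto simp del: upt_Suc)
  ultimately show "\<exists>x y. rich_witnesses R s u v a0 a c x y"
    using assms \<open>rich_instance s u a0 a c\<close> by simp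
qed

definition nonzero_rows :: "nat \<Rightarrow> nat \<Rightarrow> (nat \<Rightarrow> nat \<Rightarrow> nat) \<Rightarrow> nat set"
  where "nonzero_rows s u a = {i \<in> {1..u}. \<exists>j<s. a i j \<noteq> 0}"

(* Rows vanishing on the first s coordinates give the same value at x and y and are left out;
   for the other rows the truncated subtraction agrees with the integer one as soon as c i is
   below both dot products. *)
definition inspected_values :: "nat \<Rightarrow> nat \<Rightarrow> (nat \<Rightarrow> nat) \<Rightarrow> (nat \<Rightarrow> nat \<Rightarrow> nat) \<Rightarrow>
    (nat \<Rightarrow> nat) \<Rightarrow> (nat \<Rightarrow> nat) \<Rightarrow> (nat \<Rightarrow> nat) \<Rightarrow> nat set"
  where "inspected_values s u a0 a c x y = {dotp s a0 x, dotp s a0 y} \<union>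
    (\<lambda>i. dotp s (a i) x - c i) ` nonzero_rows s u a \<union>
    (\<lambda>i. dotp s (a i) y - c i) ` nonzero_rows s u a"

lemma finite_inspected_values: "finite (inspected_values s u a0 a c x y)"
  unfolding inspected_values_def nonzero_rows_def by auto

lemma card_inspected_values: "card (inspected_values s u a0 a c x y) \<le> 2 * u + 2"
proof -
  let ?Z = "nonzero_rows s u a"
  have "card ?Z \<le> card {1..u}"
    by (rule card_mono) (auto simp: nonzero_rows_def)
  then have Z: "finite ?Z" "card ?Z \<le> u"
    by (auto simp: nonzero_rows_def)
  have "card (inspected_values s u a0 a c x y) \<le> card {dotp s a0 x, dotp s a0 y} +
      card ((\<lambda>i. dotp s (a i) x - c i) ` ?Z) + card ((\<lambda>i. dotp s (a i) y - c i) ` ?Z)"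
    unfolding inspected_values_def by (intro order_trans[OF card_Un_le] add_mono card_Un_le order_refl)
  also have "\<dots> \<le> 2 + u + u"
    using Z by (intro add_mono order_trans[OF card_image_le]) (auto simp: card_insert_if)
  finally show ?thesis by simp
qed

lemma rich_witnesses_if_pattern:
  assumes "\<forall>j<s. v \<le> x j \<and> v \<le> y j"
    and "\<forall>n\<in>inspected_values s u a0 a c x y. n \<in> R \<longleftrightarrow> n = dotp s a0 x"
    and "dotp s a0 y \<noteq> dotp s a0 x"
    and "\<And>i. i \<in> nonzero_rows s u a \<Longrightarrow> c i \<le> dotp s (a i) x \<and> c i \<le> dotp s (a i) y"
    and "\<And>i. i \<in> nonzero_rows s u a \<Longrightarrow>
      dotp s (a i) x - c i \<noteq> dotp s a0 x \<and> dotp s (a i) y - c i \<noteq> dotp s a0 x"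
  shows "rich_witnesses R s u v a0 a c x y"
  unfolding rich_witnesses_def
proof (intro conjI ballI)
  show "dotp s a0 x \<in> R \<longleftrightarrow> dotp s a0 y \<notin> R"
    using assms(2,3) unfolding inspected_values_def by auto
  fix i assume i: "i \<in> {1..u}"
  show "int (dotp s (a i) x) - int (c i) \<in> int ` R \<longleftrightarrow> int (dotp s (a i) y) - int (c i) \<in> int ` R"
  proof (cases "i \<in> nonzero_rows s u a")
    case True
    then have "dotp s (a i) x - c i \<notin> R" "dotp s (a i) y - c i \<notin> R"
      using assms(2) assms(5)[OF True] unfolding inspected_values_def by auto
    moreover have "int (dotp s (a i) z) - int (c i) = int (dotp s (a i) z - c i)"
      if "z \<in> {x, y}" for z
      using assms(4)[OF True] that by auto
    ultimately show ?thesis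
      by (simp add: image_iff)
  next
    case False
    then have "dotp s (a i) x = 0" "dotp s (a i) y = 0"
      using i unfolding nonzero_rows_def dotp_def by auto
    then show ?thesis by simp
  qed
qed (use assms(1) in auto)

section \<open>Witnesses at separated scales\<close>

lemma scale_witnesses:
  fixes A C X Y :: nat
  assumes inst: "rich_instance s u a0 a c"
    and A: "(\<Sum>j<s. a0 j) < A" "\<And>i. i \<in> {1..u} \<Longrightarrow> (\<Sum>j<s. a i j) < A"
    and C: "\<And>i. i \<in> {1..u} \<Longrightarrow> c i \<le> C" and "C < Y" "A * Y \<le> X" "v \<le> Y"
  shows "\<And>n. n \<in> inspected_values s u a0 a c (\<lambda>j. X * A ^ j) (\<lambda>_. Y) \<Longrightarrow>
      Y - C \<le> n \<and> n \<le> X * A ^ s"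
    and "\<forall>n\<in>inspected_values s u a0 a c (\<lambda>j. X * A ^ j) (\<lambda>_. Y).
        n \<in> R \<longleftrightarrow> n = dotp s a0 (\<lambda>j. X * A ^ j) \<Longrightarrow>
      rich_witnesses R s u v a0 a c (\<lambda>j. X * A ^ j) (\<lambda>_. Y)"
proof -
  let ?x = "\<lambda>j. X * A ^ j" and ?y = "\<lambda>_::nat. Y"
  obtain j0 where j0: "j0 < s" "a0 j0 \<noteq> 0"
    using inst unfolding rich_instance_def by blast
  have "1 \<le> A"
    using A(1) by linarith
  then have "Y \<le> X" "X \<le> X * A ^ s"
    using \<open>A * Y \<le> X\<close> by (auto intro: order_trans[OF _ \<open>A * Y \<le> X\<close>])
  have a0y: "Y - C \<le> dotp s a0 ?y" "dotp s a0 ?y < X"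
    using dotp_const_bounds[OF A(1) j0, of 0 C Y X] assms(5,6) by auto
  have a0x: "X \<le> dotp s a0 ?x" "dotp s a0 ?x \<le> X * A ^ s"
    using dotp_scaled_powers_bounds[OF A(1) j0, of 0 0 X] \<open>C < Y\<close> \<open>Y \<le> X\<close> by auto
  have row_bounds: "c i \<le> dotp s (a i) ?x \<and> c i \<le> dotp s (a i) ?y \<and>
      Y - C \<le> dotp s (a i) ?x - c i \<and> dotp s (a i) ?x - c i \<le> X * A ^ s \<and>
      Y - C \<le> dotp s (a i) ?y - c i \<and> dotp s (a i) ?y - c i < X \<and>
      dotp s (a i) ?x - c i \<noteq> dotp s a0 ?x"
    if "i \<in> nonzero_rows s u a" for i
  proof -
    from that obtain j where i: "i \<in> {1..u}" and j: "j < s" "a i j \<noteq> 0"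
      unfolding nonzero_rows_def by blast
    have "c i < X"
      using C[OF i] \<open>C < Y\<close> \<open>Y \<le> X\<close> by linarith
    moreover have "\<not> ((\<forall>j<s. a i j = a0 j) \<and> c i = 0)"
      using inst i unfolding rich_instance_def by blast
    ultimately show ?thesis
      using dotp_const_bounds[OF A(2)[OF i] j C[OF i] \<open>C < Y\<close> \<open>A * Y \<le> X\<close>]
        dotp_scaled_powers_bounds[OF A(2)[OF i] j C[OF i], of X] \<open>C < Y\<close> \<open>Y \<le> X\<close>
        dotp_scaled_powers_diff_neq[OF A(2)[OF i] A(1) j, of "c i" X]
      by auto
  qed
  show "Y - C \<le> n \<and> n \<le> X * A ^ s" if "n \<in> inspected_values s u a0 a c ?x ?y" for n
    using that a0x a0y row_bounds \<open>Y \<le> X\<close> \<open>X \<le> X * A ^ s\<close>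
    unfolding inspected_values_def by fastforce
  assume "\<forall>n\<in>inspected_values s u a0 a c ?x ?y. n \<in> R \<longleftrightarrow> n = dotp s a0 ?x"
  moreover have "\<forall>j<s. v \<le> ?x j \<and> v \<le> ?y j"
    using \<open>v \<le> Y\<close> \<open>Y \<le> X\<close> \<open>1 \<le> A\<close>
    by (auto intro: order_trans[OF _ mult_le_mono2[of 1 "A ^ _" X]])
  ultimately show "rich_witnesses R s u v a0 a c ?x ?y"
    using a0x a0y by (intro rich_witnesses_if_pattern) (auto dest!: row_bounds)
qed

lemma disjoint_family_if_separated:
  fixes S :: "nat \<Rightarrow> 'a :: linorder set"
  assumes "\<And>k n. n \<in> S k \<Longrightarrow> lo k \<le> n \<and> n \<le> hi k" and "\<And>k k'. k < k' \<Longrightarrow> hi k < lo k'"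
  shows "disjoint_family S"
  unfolding disjoint_family_on_def
proof (intro ballI impI)
  fix k k' :: nat assume "k \<noteq> k'"
  then consider "k < k'" | "k' < k" by linarith
  then show "S k \<inter> S k' = {}"
    by cases (meson assms disjoint_iff leD le_less_trans)+
qed

lemma separated_scales:
  fixes A C v s :: nat
  obtains Y X :: "nat \<Rightarrow> nat"
  where "\<And>k. C < Y k" "\<And>k. A * Y k \<le> X k" "\<And>k. v \<le> Y k"
    and "\<And>k k'. k < k' \<Longrightarrow> X k * A ^ s < Y k' - C"
proof -
  define T where "T = A ^ s + A + C + v + 1"
  define Y where "Y k = T ^ (2 * k + 1)" for k
  define X where "X k = T * Y k" for k
  have "1 \<le> T"
    unfolding T_def by simp
  then have TY: "T \<le> Y k" for k
    unfolding Y_def using power_increasing[of 1 "2 * k + 1" T] by simp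
  have "A \<le> T" "C < T" "v \<le> T"
    unfolding T_def by simp_all
  then have Y: "C < Y k" "A * Y k \<le> X k" "v \<le> Y k" for k
    unfolding X_def using TY[of k] by (auto intro: mult_right_mono)
  have "X k * A ^ s < Y k' - C" if "k < k'" for k k'
  proof -
    have "1 \<le> X k"
      unfolding X_def using \<open>1 \<le> T\<close> TY[of k] by (simp add: one_le_mult_iff)
    then have "C \<le> C * X k"
      by simp
    moreover have "T * X k = X k * A ^ s + A * X k + C * X k + v * X k + X k"
      unfolding T_def by (simp add: algebra_simps)
    ultimately have "X k * A ^ s + C < T * X k"
      using \<open>1 \<le> X k\<close> by linarith
    also have "T * X k = Y (Suc k)"
      unfolding X_def Y_def by (simp add: mult.assoc)
    also have "\<dots> \<le> Y k'"
      unfolding Y_def using \<open>1 \<le> T\<close> that by (intro power_increasing) auto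
    finally show ?thesis by linarith
  qed
  with Y show thesis
    by (rule that)
qed

lemma AE_rich_witnesses:
  assumes inst: "rich_instance s u a0 a c"
  shows "AE w in coin_space. \<exists>x y. rich_witnesses {n. w n} s u v a0 a c x y"
proof -
  define A where "A = (\<Sum>j<s. a0 j) + (\<Sum>i\<in>{1..u}. \<Sum>j<s. a i j) + 1"
  define C where "C = (\<Sum>i\<in>{1..u}. c i)"
  have A0: "(\<Sum>j<s. a0 j) < A"
    unfolding A_def by simp
  have A: "(\<Sum>j<s. a i j) < A" if "i \<in> {1..u}" for i
    unfolding A_def using member_le_sum[OF that, of "\<lambda>i. \<Sum>j<s. a i j"] by auto
  have C: "c i \<le> C" if "i \<in> {1..u}" for i
    unfolding C_def using that by (intro member_le_sum) auto
  obtain Y X :: "nat \<Rightarrow> nat" where Y: "\<And>k. C < Y k" "\<And>k. A * Y k \<le> X k" "\<And>k. v \<le> Y k"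
    and separated: "\<And>k k'. k < k' \<Longrightarrow> X k * A ^ s < Y k' - C"
    using separated_scales[where A = A and C = C and v = v and s = s] by metis
  define x where "x k = (\<lambda>j. X k * A ^ j)" for k
  define y where "y k = (\<lambda>_::nat. Y k)" for k
  define S where "S k = inspected_values s u a0 a c (x k) (y k)" for k
  have witnesses: "rich_witnesses R s u v a0 a c (x k) (y k)"
    if "\<forall>n\<in>S k. n \<in> R \<longleftrightarrow> n = dotp s a0 (x k)" for R k
    using that scale_witnesses(2)[OF inst A0 A C Y(1)[of k] Y(2)[of k] Y(3)[of k]]
    unfolding S_def x_def y_def by blast
  have "Y k - C \<le> n \<and> n \<le> X k * A ^ s" if "n \<in> S k" for n k
    using that scale_witnesses(1)[OF inst A0 A C Y(1)[of k] Y(2)[of k] Y(3)[of k]]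
    unfolding S_def x_def y_def by simp
  then have "disjoint_family S"
    using separated by (rule disjoint_family_if_separated)
  then have "AE w in coin_space. \<exists>k. \<forall>n\<in>S k. w n = (n = dotp s a0 (x k))"
    unfolding S_def
    by (rule AE_coin_space_pattern_in_some_window[OF finite_inspected_values card_inspected_values])
  then show ?thesis
  proof (rule eventually_mono)
    fix w assume "\<exists>k. \<forall>n\<in>S k. w n = (n = dotp s a0 (x k))"
    then obtain k where "\<forall>n\<in>S k. n \<in> {n. w n} \<longleftrightarrow> n = dotp s a0 (x k)"
      by auto
    then show "\<exists>x y. rich_witnesses {n. w n} s u v a0 a c x y"
      using witnesses by blast
  qed
qed

theorem proposition6p7:
  shows "AE w in coin_space. rich {n. w n}"
proof -
  have "AE w in coin_space. \<forall>s u v (coeffs :: nat list) (rows :: nat list list) (constants :: nat list).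
      rich_instance s u ((!) coeffs) (\<lambda>i. (!) (rows ! i)) ((!) constants) \<longrightarrow>
      (\<exists>x y. rich_witnesses {n. w n} s u v ((!) coeffs) (\<lambda>i. (!) (rows ! i)) ((!) constants) x y)"
    by (simp only: AE_all_countable) (intro allI AE_impI AE_rich_witnesses)
  then show ?thesis
    by (rule eventually_mono) (intro rich_if_list_instances; blast)
qed

end
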